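(* Let $f_1,\dots,f_n\colon\mathbb R\to\mathbb R$ and $\eta\colon\mathbb R\times\mathbb R\to(0,\infty)$ be smooth with $\eta(x,0)=1$, and consider the metric $(\star)$ on $\mathbb R^{n+2}$, with scalar curvature $\mathrm{Scal}(x,u)=-2\eta_{uu}/\eta$. Let $k_\gamma(x)=-\eta_u(x,0)$. If $\mathrm{Scal}<0$ everywhere and there is $\varepsilon>0$ such that $|k_\gamma(x)|\le(1-\varepsilon)\sqrt{\tfrac12|\mathrm{Scal}(x,u)|}$ for all $x,u$, then the metric is complete.
   Context: The metric $(\star)$: on $\mathbb R\times\mathbb R^{n+1}$ with coordinates $(x,u,v_1,\dots,v_n)$, conventions $v_0=u$, $v_{-1}=v_{n+1}=0$, $f_0=f_{n+1}=0$, $g_{\eta,f}=\eta(x,u)^2dx^2+\sum_{j=0}^n\big(dv_j+(v_{j-1}f_j(x)-v_{j+1}f_{j+1}(x))dx\big)^2$. $k_\gamma$ is the geodesic curvature of $\gamma(x)=(x,0,\dots,0)$. *)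

theory Defs
  imports "HOL-Analysis.Analysis"
begin

definition smooth1 :: "(real \<Rightarrow> real) \<Rightarrow> bool" where
  "smooth1 h \<longleftrightarrow> (\<forall>k x. ((deriv ^^ k) h) differentiable (at x))"

text \<open>Iterated partial derivatives of a function of two real variables (x,u):
  True = derivative in x, False = derivative in u.\<close>
fun pd :: "bool list \<Rightarrow> (real \<Rightarrow> real \<Rightarrow> real) \<Rightarrow> real \<Rightarrow> real \<Rightarrow> real" where
  "pd [] h = h"
| "pd (True # ds) h = (\<lambda>x u. deriv (\<lambda>y. pd ds h y u) x)"
| "pd (False # ds) h = (\<lambda>x u. deriv (\<lambda>v. pd ds h x v) u)"

definition smooth2 :: "(real \<Rightarrow> real \<Rightarrow> real) \<Rightarrow> bool" where
  "smooth2 h \<longleftrightarrow> (\<forall>ds.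
      continuous_on UNIV (\<lambda>p. pd ds h (fst p) (snd p)) \<and>
      (\<forall>x u. (\<lambda>y. pd ds h y u) differentiable (at x) \<and>
             (\<lambda>v. pd ds h x v) differentiable (at u)))"

text \<open>A point of R x R^(n+1) is encoded as p :: nat => real with
  p 0 = x, p (j+1) = v_j (j = 0..n, v_0 = u), and p k = 0 for k > n+1.\<close>

definition pts :: "nat \<Rightarrow> (nat \<Rightarrow> real) set" where
  "pts n = {p. \<forall>k>Suc n. p k = 0}"

text \<open>f_j for j = 1..n; the conventions f_0 = f_(n+1) = 0.\<close>
definition fc :: "nat \<Rightarrow> (nat \<Rightarrow> real \<Rightarrow> real) \<Rightarrow> nat \<Rightarrow> real \<Rightarrow> real" where
  "fc n f j x = (if 1 \<le> j \<and> j \<le> n then f j x else 0)"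

text \<open>v_j of a point, with v_(-1) = v_(n+1) = 0 (j is an int index).\<close>
definition vc :: "nat \<Rightarrow> (nat \<Rightarrow> real) \<Rightarrow> int \<Rightarrow> real" where
  "vc n p j = (if 0 \<le> j \<and> j \<le> int n then p (Suc (nat j)) else 0)"

text \<open>The quadratic form g_{eta,f} at point p applied to the tangent vector w
  (w 0 = dx, w (j+1) = dv_j).\<close>
definition gform :: "nat \<Rightarrow> (real \<Rightarrow> real \<Rightarrow> real) \<Rightarrow> (nat \<Rightarrow> real \<Rightarrow> real)
      \<Rightarrow> (nat \<Rightarrow> real) \<Rightarrow> (nat \<Rightarrow> real) \<Rightarrow> real" where
  "gform n \<eta> f p w =
     (\<eta> (p 0) (p 1))\<^sup>2 * (w 0)\<^sup>2 +
     (\<Sum>j\<le>n. (w (Suc j) + (vc n p (int j - 1) * fc n f j (p 0)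
                            - vc n p (int j + 1) * fc n f (Suc j) (p 0)) * w 0)\<^sup>2)"

definition adm_curve :: "nat \<Rightarrow> (real \<Rightarrow> nat \<Rightarrow> real) \<Rightarrow> bool" where
  "adm_curve n c \<longleftrightarrow>
     (\<forall>t\<in>{0..1}. c t \<in> pts n) \<and>
     (\<forall>k\<le>Suc n. (\<lambda>t. c t k) C1_differentiable_on {0..1})"

definition curve_length :: "nat \<Rightarrow> (real \<Rightarrow> real \<Rightarrow> real) \<Rightarrow> (nat \<Rightarrow> real \<Rightarrow> real)
      \<Rightarrow> (real \<Rightarrow> nat \<Rightarrow> real) \<Rightarrow> real" where
  "curve_length n \<eta> f c =
     integral {0..1} (\<lambda>t. sqrt (gform n \<eta> f (c t)
        (\<lambda>k. vector_derivative (\<lambda>s. c s k) (at t within {0..1}))))"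

definition rdist :: "nat \<Rightarrow> (real \<Rightarrow> real \<Rightarrow> real) \<Rightarrow> (nat \<Rightarrow> real \<Rightarrow> real)
      \<Rightarrow> (nat \<Rightarrow> real) \<Rightarrow> (nat \<Rightarrow> real) \<Rightarrow> real" where
  "rdist n \<eta> f p q =
     Inf {curve_length n \<eta> f c | c. adm_curve n c \<and> c 0 = p \<and> c 1 = q}"

definition metric_complete :: "nat \<Rightarrow> (real \<Rightarrow> real \<Rightarrow> real) \<Rightarrow> (nat \<Rightarrow> real \<Rightarrow> real) \<Rightarrow> bool" where
  "metric_complete n \<eta> f \<longleftrightarrow>
     (\<forall>s :: nat \<Rightarrow> nat \<Rightarrow> real. (\<forall>i. s i \<in> pts n) \<longrightarrow>
        (\<forall>e>0. \<exists>N. \<forall>i\<ge>N. \<forall>j\<ge>N. rdist n \<eta> f (s i) (s j) < e) \<longrightarrow>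
        (\<exists>q\<in>pts n. (\<lambda>i. rdist n \<eta> f (s i) q) \<longlonglongrightarrow> 0))"

definition eta_u :: "(real \<Rightarrow> real \<Rightarrow> real) \<Rightarrow> real \<Rightarrow> real \<Rightarrow> real" where
  "eta_u \<eta> x u = deriv (\<lambda>v. \<eta> x v) u"

definition eta_uu :: "(real \<Rightarrow> real \<Rightarrow> real) \<Rightarrow> real \<Rightarrow> real \<Rightarrow> real" where
  "eta_uu \<eta> x u = deriv (\<lambda>v. eta_u \<eta> x v) u"

definition Scal :: "(real \<Rightarrow> real \<Rightarrow> real) \<Rightarrow> real \<Rightarrow> real \<Rightarrow> real" where
  "Scal \<eta> x u = - 2 * eta_uu \<eta> x u / \<eta> x u"

text \<open>Geodesic curvature of gamma(x) = (x,0,...,0): k_gamma(x) = - eta_u(x,0).\<close>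
definition k_gamma :: "(real \<Rightarrow> real \<Rightarrow> real) \<Rightarrow> real \<Rightarrow> real" where
  "k_gamma \<eta> x = - eta_u \<eta> x 0"

end

theory Submission
  imports Defs
begin

text \<open>On each vertical line x = const the function u |-> eta(x,u) is positive and strictly convex
  with eta(x,0) = 1, and the curvature hypothesis says eta_u(x,0)^2 * eta <= b * eta_uu with
  b = (1-epsilon)^2 < 1. An energy argument then gives eta >= sqrt(1-b) everywhere. With eta
  bounded below, a curve of length L moves the x-coordinate by at most L/c; the connection terms
  of the metric are orthogonal to the vertical position vector v, so |v| changes by at most L.
  Thus short curves from a Cauchy sequence stay in a compact set, where the coefficients f_j are
  bounded, and there every coordinate is Lipschitz with respect to the Riemannian distance. Hence
  a Cauchy sequence converges coordinatewise, and straight segments show that it converges to the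
  coordinatewise limit in the Riemannian distance.\<close>

lemma convex_lower_bound_while_decreasing:
  fixes \<phi> \<psi> \<xi> :: "real \<Rightarrow> real"
  assumes d1: "\<And>u. (\<phi> has_real_derivative \<psi> u) (at u)"
    and d2: "\<And>u. (\<psi> has_real_derivative \<xi> u) (at u)"
    and pos: "\<And>u. \<phi> u > 0" and one: "\<phi> 0 = 1" and b: "0 \<le> b"
    and hb: "\<And>u. (\<psi> 0)\<^sup>2 * \<phi> u \<le> b * \<xi> u"
    and \<psi>0: "\<psi> 0 \<noteq> 0" and m: "0 \<le> m" and decr: "\<And>s. s \<in> {0..m} \<Longrightarrow> \<psi> s \<le> 0"
  shows "sqrt (1 - b) \<le> \<phi> m"
proof -
  define k where "k = (\<psi> 0)\<^sup>2"
  have k: "k > 0" using \<psi>0 unfolding k_def by simp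
  \<comment> \<open>the energy b psi^2 - k phi^2 does not increase while psi <= 0\<close>
  define E where "E s = b * (\<psi> s)\<^sup>2 - k * (\<phi> s)\<^sup>2" for s
  have dE: "(E has_real_derivative (2 * \<psi> s * (b * \<xi> s - k * \<phi> s))) (at s)" for s
    unfolding E_def
    by (rule derivative_eq_intros d1 d2 refl | simp)+ (simp add: algebra_simps)
  have "E m \<le> E 0"
  proof (rule deriv_nonpos_imp_antimono[OF dE])
    fix s assume s: "s \<in> {0..m}"
    have "b * \<xi> s - k * \<phi> s \<ge> 0" using hb[of s] unfolding k_def by simp
    then show "2 * \<psi> s * (b * \<xi> s - k * \<phi> s) \<le> 0"
      using decr[OF s] by (simp add: mult_nonpos_nonneg)
  qed (use m in auto)
  then have "b * (\<psi> m)\<^sup>2 - k * (\<phi> m)\<^sup>2 \<le> b * k - k" unfolding E_def k_def one by simp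
  moreover have "b * (\<psi> m)\<^sup>2 \<ge> 0" using b by simp
  ultimately have "k * (1 - b) \<le> k * (\<phi> m)\<^sup>2" by (simp add: algebra_simps)
  then have "1 - b \<le> (\<phi> m)\<^sup>2" using k by simp
  then have "sqrt (1 - b) \<le> sqrt ((\<phi> m)\<^sup>2)" by (rule real_sqrt_le_mono)
  then show ?thesis using pos[of m] by simp
qed

lemma convex_lower_bound_nonneg:
  fixes \<phi> \<psi> \<xi> :: "real \<Rightarrow> real"
  assumes d1: "\<And>u. (\<phi> has_real_derivative \<psi> u) (at u)"
    and d2: "\<And>u. (\<psi> has_real_derivative \<xi> u) (at u)"
    and pos: "\<And>u. \<phi> u > 0" and convex: "\<And>u. \<xi> u > 0" and one: "\<phi> 0 = 1"
    and b: "0 \<le> b" "b < 1" and hb: "\<And>u. (\<psi> 0)\<^sup>2 * \<phi> u \<le> b * \<xi> u"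
    and u: "0 \<le> u"
  shows "sqrt (1 - b) \<le> \<phi> u"
proof -
  have \<psi>_mono: "\<psi> a \<le> \<psi> c" if "a \<le> c" for a c
    using deriv_nonneg_imp_mono[of a c \<psi> \<xi>] d2 convex that by (meson less_imp_le)
  have \<phi>_mono: "\<phi> a \<le> \<phi> c" if "a \<le> c" "\<psi> a \<ge> 0" for a c
    using deriv_nonneg_imp_mono[of a c \<phi> \<psi>] d1 that \<psi>_mono by (meson atLeastAtMost_iff order_trans)
  note decreasing = convex_lower_bound_while_decreasing[OF d1 d2 pos one b(1) hb]
  show ?thesis
  proof (cases "\<psi> 0 \<ge> 0")
    case True
    moreover have "sqrt (1 - b) \<le> 1" using b by simp
    ultimately show ?thesis using \<phi>_mono[OF u True] one by linarith
  next
    case False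
    show ?thesis
    proof (cases "\<psi> u \<le> 0")
      case True
      then show ?thesis
        by (intro decreasing) (use False u \<psi>_mono in \<open>force+\<close>)
    next
      case u_incr: False
      have "continuous_on {0..u} \<psi>"
        using d2 by (meson DERIV_isCont continuous_at_imp_continuous_on)
      then obtain m where m: "0 \<le> m" "m \<le> u" "\<psi> m = 0"
        using IVT'[of \<psi> 0 0 u] False u_incr u by auto
      have "sqrt (1 - b) \<le> \<phi> m"
        by (intro decreasing) (use False m \<psi>_mono in \<open>force+\<close>)
      also have "\<phi> m \<le> \<phi> u" using \<phi>_mono[of m u] m by simp
      finally show ?thesis .
    qed
  qed
qed

lemma convex_lower_bound:
  fixes \<phi> \<psi> \<xi> :: "real \<Rightarrow> real"
  assumes d1: "\<And>u. (\<phi> has_real_derivative \<psi> u) (at u)"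
    and d2: "\<And>u. (\<psi> has_real_derivative \<xi> u) (at u)"
    and pos: "\<And>u. \<phi> u > 0" and convex: "\<And>u. \<xi> u > 0" and one: "\<phi> 0 = 1"
    and b: "0 \<le> b" "b < 1" and hb: "\<And>u. (\<psi> 0)\<^sup>2 * \<phi> u \<le> b * \<xi> u"
  shows "sqrt (1 - b) \<le> \<phi> u"
proof (cases "0 \<le> u")
  case True
  then show ?thesis using convex_lower_bound_nonneg[OF d1 d2 pos convex one b hb] by blast
next
  case False
  have "sqrt (1 - b) \<le> (\<lambda>s. \<phi> (-s)) (-u)"
  proof (rule convex_lower_bound_nonneg[where \<phi>="\<lambda>s. \<phi> (-s)" and u="-u" and \<psi>="\<lambda>s. - \<psi> (-s)" and \<xi>="\<lambda>s. \<xi> (-s)"])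
    fix s
    show "((\<lambda>s. \<phi> (-s)) has_real_derivative - \<psi> (-s)) (at s)"
      using DERIV_chain2[OF d1[of "-s"] DERIV_minus[OF DERIV_ident]] by simp
    show "((\<lambda>s. - \<psi> (-s)) has_real_derivative \<xi> (-s)) (at s)"
      using DERIV_minus[OF DERIV_chain2[OF d2[of "-s"] DERIV_minus[OF DERIV_ident]]] by simp
    show "(- \<psi> (-0))\<^sup>2 * \<phi> (-s) \<le> b * \<xi> (-s)" using hb[of "-s"] by simp
  qed (use pos convex one b False in auto)
  then show ?thesis by simp
qed

lemma square_le_of_abs_le_sqrt_ratio:
  fixes a d e \<epsilon> :: real
  assumes e: "0 < e" and d: "0 < d" and a: "\<bar>a\<bar> \<le> (1 - \<epsilon>) * sqrt (d / e)"
  shows "a\<^sup>2 * e \<le> (max 0 (1 - \<epsilon>))\<^sup>2 * d"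
proof (cases "\<epsilon> < 1")
  case True
  have "a\<^sup>2 = \<bar>a\<bar>\<^sup>2" by simp
  also have "\<dots> \<le> ((1 - \<epsilon>) * sqrt (d / e))\<^sup>2"
    by (rule power_mono[OF a]) simp
  also have "\<dots> = (1 - \<epsilon>)\<^sup>2 * (d / e)"
    using d e by (simp add: power_mult_distrib)
  finally have "a\<^sup>2 * e \<le> (1 - \<epsilon>)\<^sup>2 * (d / e) * e"
    using e by (intro mult_right_mono) auto
  then show ?thesis using True e by (simp add: field_simps)
next
  case False
  have "(1 - \<epsilon>) * sqrt (d / e) \<le> 0"
    using False d e by (simp add: mult_nonpos_nonneg)
  then have "a = 0" using a by simp
  then show ?thesis using False by simp
qed

lemma eta_bounded_below:
  fixes \<eta> :: "real \<Rightarrow> real \<Rightarrow> real" and \<epsilon> :: real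
  assumes eta_smooth: "smooth2 \<eta>"
    and eta_pos: "\<forall>x u. \<eta> x u > 0"
    and eta_one: "\<forall>x. \<eta> x 0 = 1"
    and scal_neg: "\<forall>x u. Scal \<eta> x u < 0"
    and eps: "\<epsilon> > 0"
    and bound: "\<forall>x u. \<bar>k_gamma \<eta> x\<bar> \<le> (1 - \<epsilon>) * sqrt (\<bar>Scal \<eta> x u\<bar> / 2)"
  shows "\<exists>c>0. \<forall>x u. c \<le> \<eta> x u"
proof -
  define b where "b = (max 0 (1 - \<epsilon>))\<^sup>2"
  have "max 0 (1 - \<epsilon>) * max 0 (1 - \<epsilon>) < 1 * 1"
    by (rule mult_strict_mono) (use eps in auto)
  then have b: "0 \<le> b" "b < 1" unfolding b_def by (auto simp: power2_eq_square)
  have "sqrt (1 - b) \<le> \<eta> x u" for x u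
  proof (rule convex_lower_bound[where \<phi>="\<eta> x" and \<psi>="eta_u \<eta> x" and \<xi>="eta_uu \<eta> x", OF _ _ _ _ _ b])
    fix u
    have "(\<lambda>v. pd [] \<eta> x v) differentiable (at u)"
      using eta_smooth unfolding smooth2_def by blast
    then show "((\<lambda>u. \<eta> x u) has_real_derivative eta_u \<eta> x u) (at u)"
      unfolding eta_u_def by (simp add: DERIV_deriv_iff_real_differentiable)
    have "(\<lambda>v. pd [False] \<eta> x v) differentiable (at u)"
      using eta_smooth unfolding smooth2_def by blast
    then show "(eta_u \<eta> x has_real_derivative eta_uu \<eta> x u) (at u)"
      unfolding eta_uu_def eta_u_def by (simp add: DERIV_deriv_iff_real_differentiable)
    have pos: "\<eta> x u > 0" using eta_pos by blast
    moreover have "Scal \<eta> x u < 0" using scal_neg by blast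
    ultimately have uu: "eta_uu \<eta> x u > 0"
      unfolding Scal_def by (simp add: zero_less_divide_iff)
    then show "eta_uu \<eta> x u > 0" .
    have "\<bar>Scal \<eta> x u\<bar> / 2 = eta_uu \<eta> x u / \<eta> x u"
      unfolding Scal_def using uu pos by simp
    then have "\<bar>eta_u \<eta> x 0\<bar> \<le> (1 - \<epsilon>) * sqrt (eta_uu \<eta> x u / \<eta> x u)"
      using bound unfolding k_gamma_def by (metis abs_minus_cancel)
    then show "(eta_u \<eta> x 0)\<^sup>2 * \<eta> x u \<le> b * eta_uu \<eta> x u"
      unfolding b_def by (rule square_le_of_abs_le_sqrt_ratio[OF pos uu])
  qed (use eta_pos eta_one in auto)
  moreover have "sqrt (1 - b) > 0" using b by simp
  ultimately show ?thesis by blast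
qed

definition connection_coeff :: "nat \<Rightarrow> (nat \<Rightarrow> real \<Rightarrow> real) \<Rightarrow> (nat \<Rightarrow> real) \<Rightarrow> nat \<Rightarrow> real" where
  "connection_coeff n f p j =
     vc n p (int j - 1) * fc n f j (p 0) - vc n p (int j + 1) * fc n f (Suc j) (p 0)"

definition vterm :: "nat \<Rightarrow> (nat \<Rightarrow> real \<Rightarrow> real) \<Rightarrow> (nat \<Rightarrow> real) \<Rightarrow> (nat \<Rightarrow> real) \<Rightarrow> nat \<Rightarrow> real" where
  "vterm n f p w j = w (Suc j) + connection_coeff n f p j * w 0"

lemma gform_eq_vterm:
  "gform n \<eta> f p w = (\<eta> (p 0) (p 1) * w 0)\<^sup>2 + (\<Sum>j\<le>n. (vterm n f p w j)\<^sup>2)"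
  unfolding gform_def vterm_def connection_coeff_def by (simp add: power_mult_distrib)

lemma gform_cong:
  assumes "\<And>k. k \<le> Suc n \<Longrightarrow> w k = w' k"
  shows "gform n \<eta> f p w = gform n \<eta> f p w'"
  unfolding gform_def using assms by (intro arg_cong2[where f="(+)"] sum.cong) auto

lemma gform_nonneg: "0 \<le> gform n \<eta> f p w"
  unfolding gform_eq_vterm by (intro add_nonneg_nonneg sum_nonneg) auto

lemma abs_eta_dx_le_sqrt_gform: "\<bar>\<eta> (p 0) (p 1) * w 0\<bar> \<le> sqrt (gform n \<eta> f p w)"
proof -
  have "(\<eta> (p 0) (p 1) * w 0)\<^sup>2 \<le> gform n \<eta> f p w"
    unfolding gform_eq_vterm by (simp add: sum_nonneg)
  then show ?thesis using real_sqrt_le_mono by fastforce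
qed

lemma abs_vterm_le_sqrt_gform:
  assumes "j \<le> n"
  shows "\<bar>vterm n f p w j\<bar> \<le> sqrt (gform n \<eta> f p w)"
proof -
  have "(vterm n f p w j)\<^sup>2 \<le> (\<Sum>j\<le>n. (vterm n f p w j)\<^sup>2)"
    by (rule member_le_sum) (use assms in auto)
  then have "(vterm n f p w j)\<^sup>2 \<le> gform n \<eta> f p w"
    unfolding gform_eq_vterm by (smt (verit) zero_le_power2)
  then show ?thesis using real_sqrt_le_mono by fastforce
qed

lemma connection_coeff_orthogonal: "(\<Sum>j\<le>n. p (Suc j) * connection_coeff n f p j) = 0"
proof -
  define h where "h j = vc n p (int j - 1) * vc n p (int j) * fc n f j (p 0)" for j
  have "(\<Sum>j\<le>n. p (Suc j) * connection_coeff n f p j) = (\<Sum>j\<le>n. h j - h (Suc j))"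
  proof (rule sum.cong)
    fix j assume j: "j \<in> {..n}"
    have "vc n p (int j) = p (Suc j)" using j unfolding vc_def by auto
    moreover have "int (Suc j) - 1 = int j" "int (Suc j) = int j + 1" by simp_all
    ultimately show "p (Suc j) * connection_coeff n f p j = h j - h (Suc j)"
      unfolding h_def connection_coeff_def by (simp add: algebra_simps)
  qed simp
  also have "\<dots> = h 0 - h (Suc n)" by (rule sum_telescope)
  also have "\<dots> = 0" unfolding h_def fc_def by simp
  finally show ?thesis .
qed

lemma abs_radial_dv_le_sqrt_gform:
  "\<bar>\<Sum>j\<le>n. p (Suc j) * w (Suc j)\<bar> \<le> sqrt (\<Sum>j\<le>n. (p (Suc j))\<^sup>2) * sqrt (gform n \<eta> f p w)"
proof -
  have "(\<Sum>j\<le>n. p (Suc j) * w (Suc j))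
      = (\<Sum>j\<le>n. p (Suc j) * vterm n f p w j) - w 0 * (\<Sum>j\<le>n. p (Suc j) * connection_coeff n f p j)"
    unfolding vterm_def by (simp add: algebra_simps sum.distrib sum_distrib_left sum_subtractf)
  also have "\<dots> = (\<Sum>j\<le>n. p (Suc j) * vterm n f p w j)"
    by (simp add: connection_coeff_orthogonal)
  finally have eq: "(\<Sum>j\<le>n. p (Suc j) * w (Suc j)) = (\<Sum>j\<le>n. p (Suc j) * vterm n f p w j)" .
  have "\<bar>\<Sum>j\<le>n. p (Suc j) * vterm n f p w j\<bar> \<le> (\<Sum>j\<le>n. \<bar>p (Suc j)\<bar> * \<bar>vterm n f p w j\<bar>)"
    by (metis (no_types, lifting) abs_mult sum.cong sum_abs)
  also have "\<dots> \<le> L2_set (\<lambda>j. p (Suc j)) {..n} * L2_set (vterm n f p w) {..n}"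
    by (rule L2_set_mult_ineq)
  also have "\<dots> \<le> sqrt (\<Sum>j\<le>n. (p (Suc j))\<^sup>2) * sqrt (gform n \<eta> f p w)"
    unfolding L2_set_def gform_eq_vterm
    by (intro mult_left_mono real_sqrt_le_mono) (auto intro: sum_nonneg)
  finally show ?thesis using eq by simp
qed

lemma abs_connection_coeff_le:
  assumes R: "\<And>k. k \<le> Suc n \<Longrightarrow> \<bar>p k\<bar> \<le> R" and M: "\<And>i. 1 \<le> i \<Longrightarrow> i \<le> n \<Longrightarrow> \<bar>f i (p 0)\<bar> \<le> M"
    and R0: "0 \<le> R" and M0: "0 \<le> M"
  shows "\<bar>connection_coeff n f p j\<bar> \<le> 2 * R * M"
proof -
  have v: "\<bar>vc n p i\<bar> \<le> R" for i unfolding vc_def using R R0 by auto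
  have f: "\<bar>fc n f i (p 0)\<bar> \<le> M" for i unfolding fc_def using M M0 by auto
  have "\<bar>connection_coeff n f p j\<bar>
     \<le> \<bar>vc n p (int j - 1)\<bar> * \<bar>fc n f j (p 0)\<bar> + \<bar>vc n p (int j + 1)\<bar> * \<bar>fc n f (Suc j) (p 0)\<bar>"
    unfolding connection_coeff_def by (metis abs_mult abs_triangle_ineq4)
  also have "\<dots> \<le> R * M + R * M"
    by (intro add_mono mult_mono v f) (use R0 in auto)
  finally show ?thesis by (simp add: algebra_simps)
qed

lemma abs_dv_le_sqrt_gform:
  assumes j: "j \<le> n" and R: "\<And>k. k \<le> Suc n \<Longrightarrow> \<bar>p k\<bar> \<le> R"
    and M: "\<And>i. 1 \<le> i \<Longrightarrow> i \<le> n \<Longrightarrow> \<bar>f i (p 0)\<bar> \<le> M" and R0: "0 \<le> R" and M0: "0 \<le> M"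
  shows "\<bar>w (Suc j)\<bar> \<le> sqrt (gform n \<eta> f p w) + 2 * R * M * \<bar>w 0\<bar>"
proof -
  have "w (Suc j) = vterm n f p w j - connection_coeff n f p j * w 0"
    unfolding vterm_def by simp
  then have "\<bar>w (Suc j)\<bar> \<le> \<bar>vterm n f p w j\<bar> + \<bar>connection_coeff n f p j\<bar> * \<bar>w 0\<bar>"
    by (metis abs_mult abs_triangle_ineq4)
  also have "\<dots> \<le> sqrt (gform n \<eta> f p w) + 2 * R * M * \<bar>w 0\<bar>"
    by (intro add_mono abs_vterm_le_sqrt_gform j mult_right_mono abs_connection_coeff_le R M R0 M0) auto
  finally show ?thesis .
qed

lemma sqrt_gform_le_sum_abs:
  assumes R: "\<And>k. k \<le> Suc n \<Longrightarrow> \<bar>p k\<bar> \<le> R" and M: "\<And>i. 1 \<le> i \<Longrightarrow> i \<le> n \<Longrightarrow> \<bar>f i (p 0)\<bar> \<le> M"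
    and E: "\<bar>\<eta> (p 0) (p 1)\<bar> \<le> E" and R0: "0 \<le> R" and M0: "0 \<le> M"
  shows "sqrt (gform n \<eta> f p w) \<le> (E + real (Suc n) * (1 + 2 * R * M)) * (\<Sum>k\<le>Suc n. \<bar>w k\<bar>)"
proof -
  define S where "S = (\<Sum>k\<le>Suc n. \<bar>w k\<bar>)"
  have wS: "\<bar>w k\<bar> \<le> S" if "k \<le> Suc n" for k
    unfolding S_def by (rule member_le_sum[where f="\<lambda>k. \<bar>w k\<bar>"]) (use that in auto)
  have S0: "0 \<le> S" unfolding S_def by (auto intro: sum_nonneg)
  have "sqrt (gform n \<eta> f p w) \<le> sqrt ((\<eta> (p 0) (p 1) * w 0)\<^sup>2) + sqrt (\<Sum>j\<le>n. (vterm n f p w j)\<^sup>2)"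
    unfolding gform_eq_vterm by (rule sqrt_add_le_add_sqrt) (auto intro: sum_nonneg)
  also have "sqrt ((\<eta> (p 0) (p 1) * w 0)\<^sup>2) \<le> E * S"
  proof -
    have "\<bar>\<eta> (p 0) (p 1) * w 0\<bar> \<le> E * S" unfolding abs_mult
      by (rule mult_mono[OF E wS]) (use S0 E in auto)
    then show ?thesis by simp
  qed
  also have "sqrt (\<Sum>j\<le>n. (vterm n f p w j)\<^sup>2) \<le> (\<Sum>j\<le>n. \<bar>vterm n f p w j\<bar>)"
    using L2_set_le_sum_abs[of "vterm n f p w" "{..n}"] unfolding L2_set_def .
  also have "\<dots> \<le> real (card {..n}) * (S + 2 * R * M * S)"
  proof (rule sum_bounded_above)
    fix j assume j: "j \<in> {..n}"
    have "\<bar>vterm n f p w j\<bar> \<le> \<bar>w (Suc j)\<bar> + \<bar>connection_coeff n f p j\<bar> * \<bar>w 0\<bar>"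
      unfolding vterm_def by (metis abs_mult abs_triangle_ineq)
    also have "\<dots> \<le> S + 2 * R * M * S"
      by (intro add_mono mult_mono abs_connection_coeff_le R M R0 M0 wS) (use j R0 M0 in auto)
    finally show "\<bar>vterm n f p w j\<bar> \<le> S + 2 * R * M * S" .
  qed
  finally show ?thesis unfolding S_def[symmetric] by (simp add: algebra_simps)
qed

definition cderiv :: "(real \<Rightarrow> nat \<Rightarrow> real) \<Rightarrow> nat \<Rightarrow> real \<Rightarrow> real" where
  "cderiv c k t = vector_derivative (\<lambda>s. c s k) (at t)"

definition speed :: "nat \<Rightarrow> (real \<Rightarrow> real \<Rightarrow> real) \<Rightarrow> (nat \<Rightarrow> real \<Rightarrow> real)
      \<Rightarrow> (real \<Rightarrow> nat \<Rightarrow> real) \<Rightarrow> real \<Rightarrow> real" where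
  "speed n \<eta> f c t = sqrt (gform n \<eta> f (c t) (\<lambda>k. cderiv c k t))"

lemma speed_nonneg: "0 \<le> speed n \<eta> f c t"
  unfolding speed_def by (simp add: gform_nonneg)

lemma
  assumes "adm_curve n c" "k \<le> Suc n"
  shows adm_curve_has_cderiv: "\<And>t. t \<in> {0..1} \<Longrightarrow> ((\<lambda>s. c s k) has_real_derivative cderiv c k t) (at t)"
    and adm_curve_continuous_cderiv: "continuous_on {0..1} (cderiv c k)"
    and adm_curve_continuous_coord: "continuous_on {0..1} (\<lambda>t. c t k)"
proof -
  have "(\<lambda>t. c t k) C1_differentiable_on {0..1}" using assms unfolding adm_curve_def by blast
  then have dif: "\<forall>t\<in>{0..1}. (\<lambda>s. c s k) differentiable at t"
    and cd: "continuous_on {0..1} (\<lambda>t. vector_derivative (\<lambda>s. c s k) (at t))"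
    unfolding C1_differentiable_on_eq by auto
  show "((\<lambda>s. c s k) has_real_derivative cderiv c k t) (at t)" if "t \<in> {0..1}" for t
    using dif that unfolding cderiv_def
    by (simp add: has_real_derivative_iff_has_vector_derivative vector_derivative_works[symmetric])
  show "continuous_on {0..1} (cderiv c k)" using cd unfolding cderiv_def by simp
  show "continuous_on {0..1} (\<lambda>t. c t k)"
    using dif by (meson continuous_at_imp_continuous_on differentiable_imp_continuous_within)
qed

lemma curve_length_eq_integral_speed:
  assumes "adm_curve n c"
  shows "curve_length n \<eta> f c = integral {0..1} (speed n \<eta> f c)"
  unfolding curve_length_def speed_def
proof (rule integral_cong)
  fix t :: real assume t: "t \<in> {0..1}"
  show "sqrt (gform n \<eta> f (c t) (\<lambda>k. vector_derivative (\<lambda>s. c s k) (at t within {0..1}))) =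
        sqrt (gform n \<eta> f (c t) (\<lambda>k. cderiv c k t))"
  proof (intro arg_cong[where f=sqrt] gform_cong)
    fix k assume k: "k \<le> Suc n"
    have "((\<lambda>s. c s k) has_vector_derivative cderiv c k t) (at t)"
      using adm_curve_has_cderiv[OF assms k t] by (simp add: has_real_derivative_iff_has_vector_derivative)
    then show "vector_derivative (\<lambda>s. c s k) (at t within {0..1}) = cderiv c k t"
      using t by (intro vector_derivative_at_within_ivl) auto
  qed
qed

lemma curve_length_nonneg: "0 \<le> curve_length n \<eta> f c"
  unfolding curve_length_def
  by (cases "(\<lambda>t. sqrt (gform n \<eta> f (c t) (\<lambda>k. vector_derivative (\<lambda>s. c s k) (at t within {0..1}))))
               integrable_on {0..1}")
     (auto intro!: integral_nonneg simp: not_integrable_integral gform_nonneg)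

lemma abs_diff_le_integral_of_deriv_bound:
  fixes F F' H :: "real \<Rightarrow> real"
  assumes d: "\<And>s. s \<in> {0..1} \<Longrightarrow> (F has_real_derivative F' s) (at s)"
    and b: "\<And>s. s \<in> {0..1} \<Longrightarrow> \<bar>F' s\<bar> \<le> H s"
    and H: "continuous_on {0..1} H" and t: "t \<in> {0..1}"
  shows "\<bar>F t - F 0\<bar> \<le> integral {0..1} H"
proof -
  have sub: "{0..t} \<subseteq> {0..1}" using t by auto
  have H_nonneg: "0 \<le> H s" if "s \<in> {0..1}" for s using b[OF that] by linarith
  have F: "(F' has_integral (F t - F 0)) {0..t}"
    by (rule fundamental_theorem_of_calculus)
       (use t sub d in \<open>auto simp: has_real_derivative_iff_has_vector_derivative
                                 intro: has_vector_derivative_at_within\<close>)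
  have H_int: "(H has_integral integral {0..t} H) {0..t}"
    using continuous_on_subset[OF H sub] by (intro integrable_integral integrable_continuous_real)
  have F'_bound: "F' s \<le> H s" "- F' s \<le> H s" if "s \<in> {0..t}" for s
    using b[of s] that sub by auto
  have "F t - F 0 \<le> integral {0..t} H"
    by (rule has_integral_le[OF F H_int]) (use F'_bound in auto)
  moreover have "-(F t - F 0) \<le> integral {0..t} H"
    by (rule has_integral_le[OF has_integral_neg[OF F] H_int]) (use F'_bound in auto)
  ultimately have "\<bar>F t - F 0\<bar> \<le> integral {0..t} H" by linarith
  also have "\<dots> \<le> integral {0..1} H"
    by (rule integral_subset_le[OF sub])
       (use continuous_on_subset[OF H sub] H H_nonneg in \<open>auto simp: integrable_continuous_real\<close>)
  finally show ?thesis .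
qed

definition segment_curve :: "(nat \<Rightarrow> real) \<Rightarrow> (nat \<Rightarrow> real) \<Rightarrow> real \<Rightarrow> nat \<Rightarrow> real" where
  "segment_curve p q t = (\<lambda>k. p k + t * (q k - p k))"

lemma segment_curve_has_derivative:
  "((\<lambda>s. segment_curve p q s k) has_real_derivative (q k - p k)) (at t)"
  unfolding segment_curve_def by (rule derivative_eq_intros refl | simp)+

lemma cderiv_segment_curve: "cderiv (segment_curve p q) k t = q k - p k"
  unfolding cderiv_def
  by (rule vector_derivative_at)
     (simp add: segment_curve_has_derivative has_real_derivative_iff_has_vector_derivative[symmetric])

lemma segment_curve_0 [simp]: "segment_curve p q 0 = p"
  and segment_curve_1 [simp]: "segment_curve p q 1 = q"
  unfolding segment_curve_def by auto

lemma adm_segment_curve: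
  assumes "p \<in> pts n" "q \<in> pts n"
  shows "adm_curve n (segment_curve p q)"
proof -
  have "(\<lambda>t. segment_curve p q t k) C1_differentiable_on {0..1}" for k
    unfolding C1_differentiable_on_def
    by (rule exI[of _ "\<lambda>_. q k - p k"])
       (simp add: segment_curve_has_derivative has_real_derivative_iff_has_vector_derivative[symmetric])
  moreover have "segment_curve p q t \<in> pts n" for t
    using assms unfolding pts_def segment_curve_def by auto
  ultimately show ?thesis unfolding adm_curve_def by auto
qed

lemma rdist_nonneg:
  assumes "p \<in> pts n" "q \<in> pts n"
  shows "0 \<le> rdist n \<eta> f p q"
  unfolding rdist_def
  by (rule cInf_greatest)
     (use adm_segment_curve[OF assms] segment_curve_0[of p q] segment_curve_1[of p q]
          curve_length_nonneg in blast)+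

lemma rdist_le_curve_length:
  assumes "adm_curve n c" "c 0 = p" "c 1 = q"
  shows "rdist n \<eta> f p q \<le> curve_length n \<eta> f c"
  unfolding rdist_def
proof (rule cInf_lower)
  show "bdd_below {curve_length n \<eta> f c |c. adm_curve n c \<and> c 0 = p \<and> c 1 = q}"
    by (rule bdd_belowI[where m=0]) (auto simp: curve_length_nonneg)
qed (use assms in auto)

lemma rdist_less_obtains_curve:
  assumes "p \<in> pts n" "q \<in> pts n" "rdist n \<eta> f p q < z"
  obtains c where "adm_curve n c" "c 0 = p" "c 1 = q" "curve_length n \<eta> f c < z"
  using cInf_lessD[of "{curve_length n \<eta> f c | c. adm_curve n c \<and> c 0 = p \<and> c 1 = q}" z]
    assms adm_segment_curve[OF assms(1,2)] segment_curve_0[of p q] segment_curve_1[of p q]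
  unfolding rdist_def by blast

definition vnorm_sq :: "nat \<Rightarrow> (nat \<Rightarrow> real) \<Rightarrow> real" where
  "vnorm_sq n p = (\<Sum>j\<le>n. (p (Suc j))\<^sup>2)"

lemma vnorm_sq_nonneg: "0 \<le> vnorm_sq n p"
  unfolding vnorm_sq_def by (auto intro: sum_nonneg)

lemma abs_vcoord_le_vnorm_sq:
  assumes "j \<le> n"
  shows "\<bar>p (Suc j)\<bar> \<le> sqrt (vnorm_sq n p + 1)"
proof -
  have "(p (Suc j))\<^sup>2 \<le> vnorm_sq n p"
    unfolding vnorm_sq_def by (rule member_le_sum) (use assms in auto)
  then have "sqrt ((p (Suc j))\<^sup>2) \<le> sqrt (vnorm_sq n p + 1)" by (intro real_sqrt_le_mono) simp
  then show ?thesis by simp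
qed

locale continuous_star_metric =
  fixes n :: nat and \<eta> :: "real \<Rightarrow> real \<Rightarrow> real" and f :: "nat \<Rightarrow> real \<Rightarrow> real"
  assumes eta_cont: "continuous_on UNIV (\<lambda>q. \<eta> (fst q) (snd q))"
    and f_cont: "\<And>j. 1 \<le> j \<Longrightarrow> j \<le> n \<Longrightarrow> continuous_on UNIV (f j)"
begin

lemma continuous_on_speed:
  assumes adm: "adm_curve n c"
  shows "continuous_on {0..1} (speed n \<eta> f c)"
proof -
  have coord: "continuous_on {0..1} (\<lambda>t. c t k)" if "k \<le> Suc n" for k
    using adm_curve_continuous_coord[OF adm that] .
  have "continuous_on {0..1} (\<lambda>t. (c t 0, c t 1))" using coord by (intro continuous_intros) auto
  from continuous_on_compose2[OF eta_cont this]
  have eta: "continuous_on {0..1} (\<lambda>t. \<eta> (c t 0) (c t 1))" by simp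
  have vc: "continuous_on {0..1} (\<lambda>t. vc n (c t) i)" for i
    unfolding vc_def using coord by (cases "0 \<le> i \<and> i \<le> int n") auto
  have fc: "continuous_on {0..1} (\<lambda>t. fc n f j (c t 0))" for j
    unfolding fc_def
    by (cases "1 \<le> j \<and> j \<le> n") (auto intro!: continuous_on_compose2[OF f_cont coord[of 0]])
  show ?thesis
    unfolding speed_def gform_def
    by (intro continuous_intros eta vc fc adm_curve_continuous_cderiv[OF adm]) auto
qed

lemma abs_diff_le_length_of_deriv_bound:
  assumes adm: "adm_curve n c" and t: "t \<in> {0..1}" and K: "0 \<le> K"
    and d: "\<And>s. s \<in> {0..1} \<Longrightarrow> (F has_real_derivative F' s) (at s)"
    and b: "\<And>s. s \<in> {0..1} \<Longrightarrow> \<bar>F' s\<bar> \<le> K * speed n \<eta> f c s"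
  shows "\<bar>F t - F 0\<bar> \<le> K * curve_length n \<eta> f c"
proof -
  have "\<bar>F t - F 0\<bar> \<le> integral {0..1} (\<lambda>s. K * speed n \<eta> f c s)"
    by (rule abs_diff_le_integral_of_deriv_bound[OF d b _ t])
       (auto intro!: continuous_intros continuous_on_speed[OF adm])
  then show ?thesis by (simp add: curve_length_eq_integral_speed[OF adm])
qed

lemma f_bounded_on_interval:
  obtains M where "0 \<le> M" "\<And>i x. 1 \<le> i \<Longrightarrow> i \<le> n \<Longrightarrow> \<bar>x\<bar> \<le> R \<Longrightarrow> \<bar>f i x\<bar> \<le> M"
proof -
  have "continuous_on {-R..R} (\<lambda>x. \<Sum>i\<in>{1..n}. \<bar>f i x\<bar>)"
    by (intro continuous_intros continuous_on_subset[OF f_cont]) auto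
  then have "bounded ((\<lambda>x. \<Sum>i\<in>{1..n}. \<bar>f i x\<bar>) ` {-R..R})"
    by (intro compact_imp_bounded compact_continuous_image compact_Icc)
  then obtain M where M: "M > 0" "\<forall>y\<in>(\<lambda>x. \<Sum>i\<in>{1..n}. \<bar>f i x\<bar>) ` {-R..R}. norm y \<le> M"
    unfolding bounded_pos by blast
  show thesis
  proof (rule that)
    fix i x assume i: "1 \<le> i" "i \<le> n" and x: "\<bar>x\<bar> \<le> R"
    have "\<bar>f i x\<bar> \<le> (\<Sum>i\<in>{1..n}. \<bar>f i x\<bar>)" by (rule member_le_sum) (use i in auto)
    also have "\<dots> \<le> M" using M(2) x by (auto simp: abs_le_iff)
    finally show "\<bar>f i x\<bar> \<le> M" .
  qed (use M in simp)
qed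

lemma eta_bounded_on_square:
  obtains E where "\<And>x u. \<bar>x\<bar> \<le> R \<Longrightarrow> \<bar>u\<bar> \<le> R \<Longrightarrow> \<bar>\<eta> x u\<bar> \<le> E"
proof -
  have "bounded ((\<lambda>q. \<eta> (fst q) (snd q)) ` ({-R..R} \<times> {-R..R}))"
    by (intro compact_imp_bounded compact_continuous_image compact_Times compact_Icc
        continuous_on_subset[OF eta_cont]) auto
  then obtain E where "\<forall>y\<in>(\<lambda>q. \<eta> (fst q) (snd q)) ` ({-R..R} \<times> {-R..R}). norm y \<le> E"
    unfolding bounded_pos by blast
  then show thesis by (intro that[of E]) (auto simp: abs_le_iff)
qed

lemma rdist_le_sum_abs_diff:
  assumes p: "p \<in> pts n" and q: "q \<in> pts n"
    and Rp: "\<And>k. k \<le> Suc n \<Longrightarrow> \<bar>p k\<bar> \<le> R" and Rq: "\<And>k. k \<le> Suc n \<Longrightarrow> \<bar>q k\<bar> \<le> R"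
    and M: "\<And>i x. 1 \<le> i \<Longrightarrow> i \<le> n \<Longrightarrow> \<bar>x\<bar> \<le> R \<Longrightarrow> \<bar>f i x\<bar> \<le> M"
    and E: "\<And>x u. \<bar>x\<bar> \<le> R \<Longrightarrow> \<bar>u\<bar> \<le> R \<Longrightarrow> \<bar>\<eta> x u\<bar> \<le> E"
    and R0: "0 \<le> R" and M0: "0 \<le> M"
  shows "rdist n \<eta> f p q \<le> (E + real (Suc n) * (1 + 2 * R * M)) * (\<Sum>k\<le>Suc n. \<bar>q k - p k\<bar>)"
proof -
  define \<sigma> where "\<sigma> = segment_curve p q"
  define B where "B = (E + real (Suc n) * (1 + 2 * R * M)) * (\<Sum>k\<le>Suc n. \<bar>q k - p k\<bar>)"
  have adm: "adm_curve n \<sigma>" unfolding \<sigma>_def using adm_segment_curve[OF p q] .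
  have "rdist n \<eta> f p q \<le> curve_length n \<eta> f \<sigma>"
    by (rule rdist_le_curve_length[OF adm]) (simp_all add: \<sigma>_def)
  also have "\<dots> = integral {0..1} (speed n \<eta> f \<sigma>)" by (rule curve_length_eq_integral_speed[OF adm])
  also have "\<dots> \<le> integral {0..1} (\<lambda>_::real. B)"
  proof (rule integral_le)
    show "speed n \<eta> f \<sigma> integrable_on {0..1}"
      by (rule integrable_continuous_real[OF continuous_on_speed[OF adm]])
    fix t :: real assume t: "t \<in> {0..1}"
    have \<sigma>R: "\<bar>\<sigma> t k\<bar> \<le> R" if "k \<le> Suc n" for k
    proof -
      have "\<sigma> t k = (1 - t) * p k + t * q k" unfolding \<sigma>_def segment_curve_def by (simp add: algebra_simps)
      also have "\<bar>\<dots>\<bar> \<le> (1 - t) * R + t * R"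
        using t Rp[OF that] Rq[OF that]
        by (intro order_trans[OF abs_triangle_ineq] add_mono) (auto simp: abs_mult intro: mult_left_mono)
      finally show ?thesis by (simp add: algebra_simps)
    qed
    show "speed n \<eta> f \<sigma> t \<le> B"
      unfolding speed_def \<sigma>_def cderiv_segment_curve B_def
      by (rule sqrt_gform_le_sum_abs) (use \<sigma>R[unfolded \<sigma>_def] M E R0 M0 in auto)
  qed (rule integrable_const_ivl)
  also have "\<dots> = B" by simp
  finally show ?thesis unfolding B_def .
qed

end

locale star_metric_bounded_below = continuous_star_metric +
  fixes c0 :: real
  assumes c0_pos: "0 < c0" and eta_ge: "\<And>x u. c0 \<le> \<eta> x u"
begin

lemma c0_abs_dx_le_speed: "c0 * \<bar>cderiv c 0 s\<bar> \<le> speed n \<eta> f c s"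
proof -
  have "c0 * \<bar>cderiv c 0 s\<bar> \<le> \<bar>\<eta> (c s 0) (c s 1)\<bar> * \<bar>cderiv c 0 s\<bar>"
    using c0_pos eta_ge[of "c s 0" "c s 1"] by (intro mult_right_mono) auto
  also have "\<dots> \<le> speed n \<eta> f c s"
    unfolding speed_def using abs_eta_dx_le_sqrt_gform by (metis abs_mult)
  finally show ?thesis .
qed

lemma x_diff_le_length:
  assumes adm: "adm_curve n c" and t: "t \<in> {0..1}"
  shows "c0 * \<bar>c t 0 - c 0 0\<bar> \<le> curve_length n \<eta> f c"
proof -
  have "\<bar>c0 * c t 0 - c0 * c 0 0\<bar> \<le> 1 * curve_length n \<eta> f c"
  proof (rule abs_diff_le_length_of_deriv_bound[OF adm t, where F="\<lambda>s. c0 * c s 0"])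
    fix s :: real assume s: "s \<in> {0..1}"
    show "((\<lambda>s. c0 * c s 0) has_real_derivative c0 * cderiv c 0 s) (at s)"
      using adm_curve_has_cderiv[OF adm _ s, of 0] by (auto intro: DERIV_cmult)
    show "\<bar>c0 * cderiv c 0 s\<bar> \<le> 1 * speed n \<eta> f c s"
      using c0_abs_dx_le_speed c0_pos by (simp add: abs_mult)
  qed simp
  then show ?thesis using c0_pos by (simp add: abs_mult right_diff_distrib[symmetric])
qed

lemma vnorm_diff_le_length:
  assumes adm: "adm_curve n c" and t: "t \<in> {0..1}"
  shows "\<bar>sqrt (vnorm_sq n (c t) + 1) - sqrt (vnorm_sq n (c 0) + 1)\<bar> \<le> curve_length n \<eta> f c"
proof -
  have "\<bar>sqrt (vnorm_sq n (c t) + 1) - sqrt (vnorm_sq n (c 0) + 1)\<bar> \<le> 1 * curve_length n \<eta> f c"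
  proof (rule abs_diff_le_length_of_deriv_bound[OF adm t])
    fix s :: real assume s: "s \<in> {0..1}"
    define N where "N = vnorm_sq n (c s) + 1"
    define g' where "g' = (\<Sum>j\<le>n. 2 * c s (Suc j) * cderiv c (Suc j) s)"
    have N: "0 < N" using vnorm_sq_nonneg[of n "c s"] unfolding N_def by linarith
    have "((\<lambda>s. vnorm_sq n (c s) + 1) has_real_derivative g') (at s)"
      unfolding vnorm_sq_def g'_def
      by (rule derivative_eq_intros DERIV_sum adm_curve_has_cderiv[OF adm _ s] refl | simp)+
         (simp add: algebra_simps)
    from DERIV_chain2[OF DERIV_real_sqrt[OF N[unfolded N_def]] this]
    show "((\<lambda>s. sqrt (vnorm_sq n (c s) + 1)) has_real_derivative inverse (sqrt N) / 2 * g') (at s)"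
      unfolding N_def by simp
    have "\<bar>g'\<bar> = 2 * \<bar>\<Sum>j\<le>n. c s (Suc j) * cderiv c (Suc j) s\<bar>"
      unfolding g'_def by (simp add: sum_distrib_left[symmetric] mult.assoc abs_mult)
    also have "\<dots> \<le> 2 * (sqrt (vnorm_sq n (c s)) * speed n \<eta> f c s)"
      using abs_radial_dv_le_sqrt_gform[where p="c s" and w="\<lambda>k. cderiv c k s"]
      unfolding speed_def vnorm_sq_def by simp
    also have "\<dots> \<le> 2 * (sqrt N * speed n \<eta> f c s)"
      unfolding N_def by (intro mult_left_mono mult_right_mono speed_nonneg) auto
    finally show "\<bar>inverse (sqrt N) / 2 * g'\<bar> \<le> 1 * speed n \<eta> f c s"
      using N by (simp add: abs_mult field_simps)
  qed simp
  then show ?thesis by simp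
qed

definition gauge :: "(nat \<Rightarrow> real) \<Rightarrow> real" where
  "gauge p = c0 * \<bar>p 0\<bar> + sqrt (vnorm_sq n p + 1)"

lemma gauge_diff_le_length:
  assumes adm: "adm_curve n c" and t: "t \<in> {0..1}"
  shows "\<bar>gauge (c t) - gauge (c 0)\<bar> \<le> 2 * curve_length n \<eta> f c"
proof -
  have "\<bar>c0 * \<bar>c t 0\<bar> - c0 * \<bar>c 0 0\<bar>\<bar> \<le> c0 * \<bar>c t 0 - c 0 0\<bar>"
    using c0_pos abs_triangle_ineq3[of "c t 0" "c 0 0"]
    by (simp add: abs_mult right_diff_distrib[symmetric])
  then show ?thesis
    using x_diff_le_length[OF adm t] vnorm_diff_le_length[OF adm t] unfolding gauge_def by linarith
qed

lemma gauge_ge_one: "1 \<le> gauge p"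
proof -
  have "1 \<le> sqrt (vnorm_sq n p + 1)" using vnorm_sq_nonneg[of n p] by simp
  then show ?thesis unfolding gauge_def by (rule add_increasing[rotated]) (use c0_pos in simp)
qed

lemma abs_coord_le_gauge:
  assumes "k \<le> Suc n"
  shows "\<bar>p k\<bar> \<le> (1 + 1 / c0) * gauge p"
proof (cases k)
  case 0
  have "c0 * \<bar>p 0\<bar> \<le> gauge p" unfolding gauge_def using vnorm_sq_nonneg[of n p] by simp
  then have "\<bar>p 0\<bar> \<le> gauge p / c0" using c0_pos by (simp add: field_simps)
  then show ?thesis using 0 gauge_ge_one[of p] by (simp add: algebra_simps)
next
  case (Suc j)
  have "\<bar>p (Suc j)\<bar> \<le> sqrt (vnorm_sq n p + 1)" using Suc assms by (intro abs_vcoord_le_vnorm_sq) simp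
  moreover have "0 \<le> c0 * \<bar>p 0\<bar>" using c0_pos by simp
  ultimately have "\<bar>p k\<bar> \<le> gauge p" unfolding gauge_def Suc by linarith
  moreover have "0 \<le> gauge p / c0" using c0_pos gauge_ge_one[of p] by simp
  ultimately show ?thesis by (simp add: algebra_simps)
qed

lemma coord_diff_le_length:
  assumes adm: "adm_curve n c"
    and R: "\<And>t k. t \<in> {0..1} \<Longrightarrow> k \<le> Suc n \<Longrightarrow> \<bar>c t k\<bar> \<le> R"
    and M: "\<And>i x. 1 \<le> i \<Longrightarrow> i \<le> n \<Longrightarrow> \<bar>x\<bar> \<le> R \<Longrightarrow> \<bar>f i x\<bar> \<le> M"
    and R0: "0 \<le> R" and M0: "0 \<le> M" and k: "k \<le> Suc n"
  shows "\<bar>c 1 k - c 0 k\<bar> \<le> (1 + (1 + 2 * R * M) / c0) * curve_length n \<eta> f c"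
    (is "_ \<le> ?K * ?L")
proof -
  have L: "0 \<le> ?L" by (rule curve_length_nonneg)
  have t1: "(1::real) \<in> {0..1}" by simp
  show ?thesis
  proof (cases k)
    case 0
    have "c0 * \<bar>c 1 0 - c 0 0\<bar> \<le> ?L" by (rule x_diff_le_length[OF adm t1])
    then have "\<bar>c 1 0 - c 0 0\<bar> \<le> (1 / c0) * ?L" using c0_pos by (simp add: field_simps)
    also have "\<dots> \<le> ?K * ?L"
      using c0_pos R0 M0 L by (intro mult_right_mono) (auto simp: add_divide_distrib)
    finally show ?thesis using 0 by simp
  next
    case (Suc j)
    have "\<bar>c 1 (Suc j) - c 0 (Suc j)\<bar> \<le> (1 + 2 * R * M / c0) * ?L"
    proof (rule abs_diff_le_length_of_deriv_bound[OF adm t1])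
      fix s :: real assume s: "s \<in> {0..1}"
      show "((\<lambda>s. c s (Suc j)) has_real_derivative cderiv c (Suc j) s) (at s)"
        using adm_curve_has_cderiv[OF adm _ s, of "Suc j"] Suc k by simp
      have "\<bar>cderiv c (Suc j) s\<bar> \<le> speed n \<eta> f c s + 2 * R * M * \<bar>cderiv c 0 s\<bar>"
        unfolding speed_def by (rule abs_dv_le_sqrt_gform) (use Suc k R M s R0 M0 in auto)
      also have "2 * R * M * \<bar>cderiv c 0 s\<bar> \<le> 2 * R * M * (speed n \<eta> f c s / c0)"
        using c0_abs_dx_le_speed[of c s] c0_pos R0 M0
        by (intro mult_left_mono) (auto simp: field_simps)
      finally show "\<bar>cderiv c (Suc j) s\<bar> \<le> (1 + 2 * R * M / c0) * speed n \<eta> f c s"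
        by (simp add: algebra_simps)
    qed (use c0_pos R0 M0 in simp)
    also have "\<dots> \<le> ?K * ?L"
      using c0_pos L by (intro mult_right_mono) (auto simp: add_divide_distrib)
    finally show ?thesis using Suc by simp
  qed
qed

lemma rdist_Cauchy_bounded:
  fixes s :: "nat \<Rightarrow> nat \<Rightarrow> real"
  assumes pts: "\<forall>i. s i \<in> pts n"
    and cau: "\<forall>e>0. \<exists>N. \<forall>i\<ge>N. \<forall>j\<ge>N. rdist n \<eta> f (s i) (s j) < e"
  obtains R N where "0 \<le> R" and "\<And>i k. N \<le> i \<Longrightarrow> k \<le> Suc n \<Longrightarrow> \<bar>s i k\<bar> \<le> R"
    and "\<And>i c t k. N \<le> i \<Longrightarrow> adm_curve n c \<Longrightarrow> c 0 = s i \<Longrightarrow> curve_length n \<eta> f c < 1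
           \<Longrightarrow> t \<in> {0..1} \<Longrightarrow> k \<le> Suc n \<Longrightarrow> \<bar>c t k\<bar> \<le> R"
proof -
  obtain N where N: "\<And>i j. N \<le> i \<Longrightarrow> N \<le> j \<Longrightarrow> rdist n \<eta> f (s i) (s j) < 1"
    using cau zero_less_one by blast
  define G where "G = gauge (s N) + 2"
  have tail: "gauge (s i) \<le> G" if i: "N \<le> i" for i
  proof -
    have "rdist n \<eta> f (s N) (s i) < 1" using N i by simp
    then obtain c where c: "adm_curve n c" "c 0 = s N" "c 1 = s i" "curve_length n \<eta> f c < 1"
      by (rule rdist_less_obtains_curve[OF pts[rule_format] pts[rule_format]])
    have "\<bar>gauge (s i) - gauge (s N)\<bar> \<le> 2 * curve_length n \<eta> f c"
      using gauge_diff_le_length[OF c(1), of 1] c(2,3) by simp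
    then show ?thesis using c(4) unfolding G_def by linarith
  qed
  have near: "gauge (c t) \<le> G + 2"
    if "N \<le> i" "adm_curve n c" "c 0 = s i" "curve_length n \<eta> f c < 1" "t \<in> {0..1}" for i c t
    using gauge_diff_le_length[OF that(2,5)] tail[OF that(1)] that(4) unfolding that(3) by linarith
  define R where "R = (1 + 1 / c0) * (G + 2)"
  have coord: "\<bar>p k\<bar> \<le> R" if "gauge p \<le> G + 2" "k \<le> Suc n" for p k
  proof -
    have "\<bar>p k\<bar> \<le> (1 + 1 / c0) * gauge p" by (rule abs_coord_le_gauge[OF that(2)])
    also have "\<dots> \<le> R" unfolding R_def using that(1) c0_pos by (intro mult_left_mono) auto
    finally show ?thesis .
  qed
  show thesis
  proof (rule that[of R N])
    show "0 \<le> R" unfolding R_def G_def using c0_pos gauge_ge_one[of "s N"] by simp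
    show "\<bar>s i k\<bar> \<le> R" if "N \<le> i" "k \<le> Suc n" for i k
      by (rule coord) (use tail[OF that(1)] that(2) in linarith)+
    show "\<bar>c t k\<bar> \<le> R" if "N \<le> i" "adm_curve n c" "c 0 = s i" "curve_length n \<eta> f c < 1"
      "t \<in> {0..1}" "k \<le> Suc n" for i c t k
      by (rule coord[OF near[OF that(1-5)] that(6)])
  qed
qed

lemma rdist_Cauchy_imp_Cauchy_coord:
  fixes s :: "nat \<Rightarrow> nat \<Rightarrow> real"
  assumes pts: "\<forall>i. s i \<in> pts n"
    and cau: "\<forall>e>0. \<exists>N. \<forall>i\<ge>N. \<forall>j\<ge>N. rdist n \<eta> f (s i) (s j) < e"
  shows "Cauchy (\<lambda>i. s i k)"
proof (cases "k \<le> Suc n")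
  case False
  then have "(\<lambda>i. s i k) = (\<lambda>i. 0)" using pts unfolding pts_def by auto
  then show ?thesis by (simp add: Cauchy_convergent_iff convergent_const)
next
  case True
  obtain R N0 where R0: "0 \<le> R"
    and near: "\<And>i c t k. N0 \<le> i \<Longrightarrow> adm_curve n c \<Longrightarrow> c 0 = s i \<Longrightarrow> curve_length n \<eta> f c < 1
      \<Longrightarrow> t \<in> {0..1} \<Longrightarrow> k \<le> Suc n \<Longrightarrow> \<bar>c t k\<bar> \<le> R"
    by (rule rdist_Cauchy_bounded[OF pts cau]) (rule that)
  obtain M where M0: "0 \<le> M" and M: "\<And>i x. 1 \<le> i \<Longrightarrow> i \<le> n \<Longrightarrow> \<bar>x\<bar> \<le> R \<Longrightarrow> \<bar>f i x\<bar> \<le> M"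
    by (rule f_bounded_on_interval[of R]) (rule that)
  define K where "K = 1 + (1 + 2 * R * M) / c0"
  have K: "0 < K" unfolding K_def using c0_pos R0 M0 by (simp add: add_pos_nonneg)
  show ?thesis
  proof (rule metric_CauchyI)
    fix e :: real assume e: "0 < e"
    have "0 < min 1 (e / K)" using e K by simp
    then obtain N where N: "\<forall>i\<ge>N. \<forall>j\<ge>N. rdist n \<eta> f (s i) (s j) < min 1 (e / K)"
      using cau by blast
    show "\<exists>N'. \<forall>i\<ge>N'. \<forall>j\<ge>N'. dist (s i k) (s j k) < e"
    proof (intro exI[of _ "max N N0"] allI impI)
      fix i j assume ij: "max N N0 \<le> i" "max N N0 \<le> j"
      have "rdist n \<eta> f (s i) (s j) < min 1 (e / K)" using N ij by simp
      then obtain c where c: "adm_curve n c" "c 0 = s i" "c 1 = s j"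
        "curve_length n \<eta> f c < min 1 (e / K)"
        by (rule rdist_less_obtains_curve[OF pts[rule_format] pts[rule_format]])
      have "\<bar>c t k'\<bar> \<le> R" if "t \<in> {0..1}" "k' \<le> Suc n" for t k'
        using near[of i c t k'] ij c that by simp
      then have "\<bar>c 1 k - c 0 k\<bar> \<le> K * curve_length n \<eta> f c"
        unfolding K_def by (rule coord_diff_le_length[OF c(1) _ M R0 M0 True])
      also have "\<dots> < e" using c(4) K by (simp add: less_divide_eq mult.commute)
      finally show "dist (s i k) (s j k) < e" using c by (simp add: dist_real_def abs_minus_commute)
    qed
  qed
qed

theorem metric_complete: "metric_complete n \<eta> f"
  unfolding metric_complete_def
proof (intro allI impI)
  fix s :: "nat \<Rightarrow> nat \<Rightarrow> real"
  assume pts: "\<forall>i. s i \<in> pts n"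
    and cau: "\<forall>e>0. \<exists>N. \<forall>i\<ge>N. \<forall>j\<ge>N. rdist n \<eta> f (s i) (s j) < e"
  obtain R N where R0: "0 \<le> R" and sR: "\<And>i k. N \<le> i \<Longrightarrow> k \<le> Suc n \<Longrightarrow> \<bar>s i k\<bar> \<le> R"
    by (rule rdist_Cauchy_bounded[OF pts cau]) (rule that)
  obtain M where M0: "0 \<le> M" and M: "\<And>i x. 1 \<le> i \<Longrightarrow> i \<le> n \<Longrightarrow> \<bar>x\<bar> \<le> R \<Longrightarrow> \<bar>f i x\<bar> \<le> M"
    by (rule f_bounded_on_interval[of R]) (rule that)
  obtain E where E: "\<And>x u. \<bar>x\<bar> \<le> R \<Longrightarrow> \<bar>u\<bar> \<le> R \<Longrightarrow> \<bar>\<eta> x u\<bar> \<le> E"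
    by (rule eta_bounded_on_square[of R]) (rule that)
  define q where "q k = lim (\<lambda>i. s i k)" for k
  have sq: "(\<lambda>i. s i k) \<longlonglongrightarrow> q k" for k
    unfolding q_def using rdist_Cauchy_imp_Cauchy_coord[OF pts cau, of k]
    by (simp add: Cauchy_convergent_iff convergent_LIMSEQ_iff)
  have q: "q \<in> pts n"
    unfolding pts_def
  proof (intro CollectI allI impI)
    fix k assume "Suc n < k"
    then have "(\<lambda>i. s i k) = (\<lambda>i. 0)" using pts unfolding pts_def by auto
    then show "q k = 0" using sq[of k] LIMSEQ_unique tendsto_const by metis
  qed
  have qR: "\<bar>q k\<bar> \<le> R" if "k \<le> Suc n" for k
    by (rule LIMSEQ_le_const2[OF tendsto_rabs[OF sq[of k]]]) (use sR[OF _ that] in blast)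
  define B where "B = E + real (Suc n) * (1 + 2 * R * M)"
  have "(\<lambda>i. rdist n \<eta> f (s i) q) \<longlonglongrightarrow> 0"
  proof (rule tendsto_sandwich[of "\<lambda>_. 0" _ _ "\<lambda>i. B * (\<Sum>k\<le>Suc n. \<bar>q k - s i k\<bar>)"])
    show "\<forall>\<^sub>F i in sequentially. 0 \<le> rdist n \<eta> f (s i) q"
      using rdist_nonneg pts q by simp
    show "\<forall>\<^sub>F i in sequentially. rdist n \<eta> f (s i) q \<le> B * (\<Sum>k\<le>Suc n. \<bar>q k - s i k\<bar>)"
      unfolding B_def using pts q sR qR M E R0 M0
      by (intro eventually_sequentiallyI[of N] rdist_le_sum_abs_diff) auto
    have "(\<lambda>i. B * (\<Sum>k\<le>Suc n. \<bar>q k - s i k\<bar>)) \<longlonglongrightarrow> B * (\<Sum>k\<le>Suc n. \<bar>q k - q k\<bar>)"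
      by (intro tendsto_intros sq)
    then show "(\<lambda>i. B * (\<Sum>k\<le>Suc n. \<bar>q k - s i k\<bar>)) \<longlonglongrightarrow> 0" by simp
  qed simp
  with q show "\<exists>q\<in>pts n. (\<lambda>i. rdist n \<eta> f (s i) q) \<longlonglongrightarrow> 0" by blast
qed

end

theorem proposition3p4:
  fixes n :: nat and f :: "nat \<Rightarrow> real \<Rightarrow> real" and \<eta> :: "real \<Rightarrow> real \<Rightarrow> real"
    and \<epsilon> :: real
  assumes f_smooth: "\<forall>j\<in>{1..n}. smooth1 (f j)"
    and eta_smooth: "smooth2 \<eta>"
    and eta_pos: "\<forall>x u. \<eta> x u > 0"
    and eta_one: "\<forall>x. \<eta> x 0 = 1"
    and scal_neg: "\<forall>x u. Scal \<eta> x u < 0"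
    and eps: "\<epsilon> > 0"
    and bound: "\<forall>x u. \<bar>k_gamma \<eta> x\<bar> \<le> (1 - \<epsilon>) * sqrt (\<bar>Scal \<eta> x u\<bar> / 2)"
  shows "metric_complete n \<eta> f"
proof -
  obtain c0 where c0: "0 < c0" "\<forall>x u. c0 \<le> \<eta> x u"
    using eta_bounded_below[OF eta_smooth eta_pos eta_one scal_neg eps bound] by blast
  have eta_cont: "continuous_on UNIV (\<lambda>q. \<eta> (fst q) (snd q))"
    using eta_smooth unfolding smooth2_def by (metis pd.simps(1))
  have f_cont: "continuous_on UNIV (f j)" if "1 \<le> j" "j \<le> n" for j
  proof -
    have "smooth1 (f j)" using f_smooth that by simp
    then have "\<forall>x. ((deriv ^^ 0) (f j)) differentiable (at x)"
      unfolding smooth1_def by blast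
    then show ?thesis
      by (simp add: continuous_at_imp_continuous_on differentiable_imp_continuous_within)
  qed
  interpret star_metric_bounded_below n \<eta> f c0
    by unfold_locales (use eta_cont f_cont c0 in auto)
  show ?thesis by (rule metric_complete)
qed

end
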